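(* Let $r\ge5$ and let $W_{r+1}=C_r\vee K_1$ be the wheel. Then $\operatorname{ZIR}(W_{r+1})=r-\gamma(C_r)=r-\lceil r/3\rceil$ and $\operatorname{zir}(W_{r+1})=\operatorname{Z}(W_{r+1})=\overline{\operatorname{Z}}(W_{r+1})=3$.
   Context: $\vee$ is the join; $\gamma$ is the domination number. Zero forcing: a blue vertex $u$ changes a white vertex $w$ to blue if $w$ is the only white neighbor of $u$; $B$ is a zero forcing set if from blue set $B$ eventually all vertices are blue; $\operatorname{Z}(G)$ is the minimum size of a zero forcing set and $\overline{\operatorname{Z}}(G)$ the maximum size of an inclusion-minimal zero forcing set. A nonempty $F\subseteq V(G)$ is a fort if every $v\notin F$ has $|N(v)\cap F|\ne1$. A private fort of $x\in S$ relative to $S$ is a fort $F$ with $S\cap F=\{x\}$; $S$ is a ZIr-set if every element of $S$ has a private fort. $\operatorname{zir}(G)$ / $\operatorname{ZIR}(G)$ are the minimum / maximum cardinality of an inclusion-maximal ZIr-set. *)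

theory Defs imports Complex_Main begin

text \<open>Finite simple graphs are given by a vertex set V and an adjacency predicate E
(assumed symmetric and irreflexive on V for the graphs used below).\<close>

definition nbhd :: "'a set \<Rightarrow> ('a \<Rightarrow> 'a \<Rightarrow> bool) \<Rightarrow> 'a \<Rightarrow> 'a set" where
  "nbhd V E v = {u \<in> V. E v u}"

definition zf_step :: "'a set \<Rightarrow> ('a \<Rightarrow> 'a \<Rightarrow> bool) \<Rightarrow> 'a set \<Rightarrow> 'a set" where
  "zf_step V E S = S \<union> {w. \<exists>u\<in>S. nbhd V E u - S = {w}}"

definition zf_closure :: "'a set \<Rightarrow> ('a \<Rightarrow> 'a \<Rightarrow> bool) \<Rightarrow> 'a set \<Rightarrow> 'a set" where
  "zf_closure V E B = (\<Union>n. (zf_step V E ^^ n) B)"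

definition zero_forcing_set :: "'a set \<Rightarrow> ('a \<Rightarrow> 'a \<Rightarrow> bool) \<Rightarrow> 'a set \<Rightarrow> bool" where
  "zero_forcing_set V E B \<longleftrightarrow> B \<subseteq> V \<and> zf_closure V E B = V"

definition minimal_zero_forcing_set :: "'a set \<Rightarrow> ('a \<Rightarrow> 'a \<Rightarrow> bool) \<Rightarrow> 'a set \<Rightarrow> bool" where
  "minimal_zero_forcing_set V E B \<longleftrightarrow> zero_forcing_set V E B \<and>
     (\<forall>B'. B' \<subset> B \<longrightarrow> \<not> zero_forcing_set V E B')"

definition Z :: "'a set \<Rightarrow> ('a \<Rightarrow> 'a \<Rightarrow> bool) \<Rightarrow> nat" where
  "Z V E = Min (card ` {B. zero_forcing_set V E B})"

definition Zbar :: "'a set \<Rightarrow> ('a \<Rightarrow> 'a \<Rightarrow> bool) \<Rightarrow> nat" where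
  "Zbar V E = Max (card ` {B. minimal_zero_forcing_set V E B})"

definition fort :: "'a set \<Rightarrow> ('a \<Rightarrow> 'a \<Rightarrow> bool) \<Rightarrow> 'a set \<Rightarrow> bool" where
  "fort V E F \<longleftrightarrow> F \<noteq> {} \<and> F \<subseteq> V \<and> (\<forall>v\<in>V - F. card (nbhd V E v \<inter> F) \<noteq> 1)"

definition private_fort :: "'a set \<Rightarrow> ('a \<Rightarrow> 'a \<Rightarrow> bool) \<Rightarrow> 'a set \<Rightarrow> 'a \<Rightarrow> 'a set \<Rightarrow> bool" where
  "private_fort V E S x F \<longleftrightarrow> fort V E F \<and> S \<inter> F = {x}"

definition ZIr_set :: "'a set \<Rightarrow> ('a \<Rightarrow> 'a \<Rightarrow> bool) \<Rightarrow> 'a set \<Rightarrow> bool" where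
  "ZIr_set V E S \<longleftrightarrow> S \<subseteq> V \<and> (\<forall>x\<in>S. \<exists>F. private_fort V E S x F)"

definition maximal_ZIr_set :: "'a set \<Rightarrow> ('a \<Rightarrow> 'a \<Rightarrow> bool) \<Rightarrow> 'a set \<Rightarrow> bool" where
  "maximal_ZIr_set V E S \<longleftrightarrow> ZIr_set V E S \<and> (\<forall>T. S \<subset> T \<longrightarrow> \<not> ZIr_set V E T)"

definition zir :: "'a set \<Rightarrow> ('a \<Rightarrow> 'a \<Rightarrow> bool) \<Rightarrow> nat" where
  "zir V E = Min (card ` {S. maximal_ZIr_set V E S})"

definition ZIR :: "'a set \<Rightarrow> ('a \<Rightarrow> 'a \<Rightarrow> bool) \<Rightarrow> nat" where
  "ZIR V E = Max (card ` {S. maximal_ZIr_set V E S})"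

definition dominating_set :: "'a set \<Rightarrow> ('a \<Rightarrow> 'a \<Rightarrow> bool) \<Rightarrow> 'a set \<Rightarrow> bool" where
  "dominating_set V E D \<longleftrightarrow> D \<subseteq> V \<and> (\<forall>v\<in>V. v \<in> D \<or> (\<exists>u\<in>D. E v u))"

definition domination_number :: "'a set \<Rightarrow> ('a \<Rightarrow> 'a \<Rightarrow> bool) \<Rightarrow> nat" where
  "domination_number V E = Min (card ` {D. dominating_set V E D})"

definition cycle_V :: "nat \<Rightarrow> nat set" where "cycle_V r = {0..<r}"
definition cycle_adj :: "nat \<Rightarrow> nat \<Rightarrow> nat \<Rightarrow> bool" where
  "cycle_adj r i j \<longleftrightarrow> i < r \<and> j < r \<and> i \<noteq> j \<and> (j = (i + 1) mod r \<or> i = (j + 1) mod r)"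

text \<open>The wheel W_{r+1} = C_r join K_1, the K_1 vertex being r.\<close>
definition wheel_V :: "nat \<Rightarrow> nat set" where "wheel_V r = {0..r}"
definition wheel_adj :: "nat \<Rightarrow> nat \<Rightarrow> nat \<Rightarrow> bool" where
  "wheel_adj r i j \<longleftrightarrow> cycle_adj r i j \<or> (i < r \<and> j = r) \<or> (i = r \<and> j < r)"

end

theory Submission
  imports Defs
begin

text \<open>Zero forcing sets are exactly the sets meeting every fort. On the wheel, a fort containing
  the hub is the hub together with a dominating set of the rim, and a fort avoiding the hub is a
  set of at least two rim vertices whose complement in the rim is independent. Every set
  \<open>{hub, a, b}\<close> is a ZIr set, so none of its proper subsets is zero forcing; hence zero
  forcing sets have at least three vertices, and small ZIr sets are never maximal. Moreover
  every zero forcing set contains the hub with two consecutive rim vertices, or three consecutive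
  rim vertices, and both kinds of triple are zero forcing. A ZIr set \<open>S\<close> either has a
  private fort avoiding the hub, which makes the rest of \<open>S\<close> independent on the rim, or
  all its private forts contain the hub, which makes the rim vertices outside \<open>S\<close>
  dominate the rim; for \<open>r \<ge> 5\<close> either way gives \<open>|S| \<le> r - \<gamma>(C\<^sub>r)\<close>, with
  equality for the complement of a minimum dominating set.\<close>

section \<open>Zero forcing sets and forts\<close>

lemma zf_step_subset: "S \<subseteq> V \<Longrightarrow> zf_step V E S \<subseteq> V"
  by (auto simp: zf_step_def nbhd_def)

lemma zf_stage_subset: "B \<subseteq> V \<Longrightarrow> (zf_step V E ^^ n) B \<subseteq> V"
  by (induction n) (simp_all add: zf_step_subset)

lemma zf_stage_mono: "m \<le> n \<Longrightarrow> (zf_step V E ^^ m) B \<subseteq> (zf_step V E ^^ n) B"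
  by (induction n) (auto simp: le_Suc_eq zf_step_def)

lemma subset_zf_closure: "B \<subseteq> zf_closure V E B"
  unfolding zf_closure_def by (metis UN_upper UNIV_I funpow_0)

lemma zf_closure_subset: "B \<subseteq> V \<Longrightarrow> zf_closure V E B \<subseteq> V"
  unfolding zf_closure_def using zf_stage_subset by blast

lemma zf_step_zf_closure:
  assumes "finite V" "B \<subseteq> V"
  shows "zf_step V E (zf_closure V E B) = zf_closure V E B"
proof -
  let ?stage = "\<lambda>n. (zf_step V E ^^ n) B"
  have "range ?stage \<subseteq> Pow V"
    using zf_stage_subset[OF assms(2)] by blast
  then have "finite (range ?stage)"
    by (rule finite_subset) (simp add: assms(1))
  moreover have "?stage m \<subseteq> ?stage n \<or> ?stage n \<subseteq> ?stage m" for m n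
    by (cases "m \<le> n") (simp_all add: zf_stage_mono)
  then have "subset.chain UNIV (range ?stage)"
    unfolding subset.chain_def by blast
  ultimately have "\<Union>(range ?stage) \<in> range ?stage"
    by (intro Union_in_chain) auto
  then obtain N where "\<Union>(range ?stage) = ?stage N"
    by (rule rangeE)
  then have N: "zf_closure V E B = ?stage N"
    by (simp add: zf_closure_def)
  have "?stage (Suc N) \<subseteq> zf_closure V E B"
    unfolding zf_closure_def by blast
  moreover have "zf_closure V E B \<subseteq> zf_step V E (zf_closure V E B)"
    by (simp add: zf_step_def)
  ultimately show ?thesis
    using N by simp
qed

text \<open>A fort that the blue set avoids can never be entered: a blue vertex outside the fort
  sees either none or at least two of its white vertices.\<close>

lemma zf_step_disjoint_fort:
  assumes "fort V E F" "S \<subseteq> V" "S \<inter> F = {}"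
  shows "zf_step V E S \<inter> F = {}"
proof (rule ccontr)
  assume "zf_step V E S \<inter> F \<noteq> {}"
  then obtain u w where u: "u \<in> S" and w: "nbhd V E u - S = {w}" "w \<in> F"
    using assms(3) unfolding zf_step_def by blast
  have "nbhd V E u \<inter> F = {w}"
    using w assms(3) by blast
  moreover have "u \<in> V - F"
    using u assms(2,3) by blast
  then have "card (nbhd V E u \<inter> F) \<noteq> 1"
    using assms(1) unfolding fort_def by blast
  ultimately show False
    by simp
qed

lemma zero_forcing_set_meets_fort:
  assumes zf: "zero_forcing_set V E B" and F: "fort V E F"
  shows "B \<inter> F \<noteq> {}"
proof
  assume BF: "B \<inter> F = {}"
  have BV: "B \<subseteq> V"
    using zf by (simp add: zero_forcing_set_def)
  have "(zf_step V E ^^ n) B \<inter> F = {}" for n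
  proof (induction n)
    case (Suc n)
    then show ?case
      using zf_step_disjoint_fort[OF F zf_stage_subset[OF BV]] by simp
  qed (simp add: BF)
  then have "zf_closure V E B \<inter> F = {}"
    unfolding zf_closure_def by blast
  moreover have "zf_closure V E B = V" "F \<noteq> {}" "F \<subseteq> V"
    using zf F by (simp_all add: zero_forcing_set_def fort_def)
  ultimately show False
    by blast
qed

lemma zero_forcing_setI_meets_forts:
  assumes fin: "finite V" and BV: "B \<subseteq> V" and meets: "\<And>F. fort V E F \<Longrightarrow> B \<inter> F \<noteq> {}"
  shows "zero_forcing_set V E B"
proof (rule ccontr)
  \<comment> \<open>The closure admits no further force, so the vertices it misses form a fort.\<close>
  let ?C = "zf_closure V E B"
  assume "\<not> zero_forcing_set V E B"
  then have "V - ?C \<noteq> {}"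
    using BV zf_closure_subset[OF BV] by (auto simp: zero_forcing_set_def)
  moreover have "card (nbhd V E v \<inter> (V - ?C)) \<noteq> 1" if "v \<in> V - (V - ?C)" for v
  proof
    assume "card (nbhd V E v \<inter> (V - ?C)) = 1"
    then obtain w where "nbhd V E v \<inter> (V - ?C) = {w}"
      by (auto simp: card_1_singleton_iff)
    then have "nbhd V E v - ?C = {w}"
      by (auto simp: nbhd_def)
    then have "w \<in> zf_step V E ?C" and "w \<notin> ?C"
      using that unfolding zf_step_def by blast+
    then show False
      using zf_step_zf_closure[OF fin BV] by simp
  qed
  ultimately have "fort V E (V - ?C)"
    unfolding fort_def by blast
  moreover have "B \<inter> (V - ?C) = {}"
    using subset_zf_closure[of B V E] by blast
  ultimately show False
    using meets by blast
qed

lemma not_zero_forcing_psubset_ZIr_set: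
  assumes "ZIr_set V E S" "B \<subset> S"
  shows "\<not> zero_forcing_set V E B"
proof -
  obtain x where "x \<in> S" "x \<notin> B"
    using assms(2) by blast
  then obtain F where F: "fort V E F" "S \<inter> F = {x}"
    using assms(1) by (auto simp: ZIr_set_def private_fort_def)
  have "B \<subseteq> S - {x}"
    using \<open>x \<notin> B\<close> assms(2) by blast
  then have "B \<inter> F = {}"
    using F(2) by blast
  then show ?thesis
    using zero_forcing_set_meets_fort[OF _ F(1)] by blast
qed

lemma Min_card_eqI:
  assumes "finite A" "\<And>S. P S \<Longrightarrow> S \<subseteq> A" "\<And>S. P S \<Longrightarrow> k \<le> card S" "P S\<^sub>0" "card S\<^sub>0 = k"
  shows "Min (card ` {S. P S}) = k"
proof (rule Min_eqI)
  have "{S. P S} \<subseteq> Pow A"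
    using assms(2) by blast
  then show "finite (card ` {S. P S})"
    using assms(1) finite_subset by blast
  show "k \<le> y" if "y \<in> card ` {S. P S}" for y
    using that assms(3) by blast
  show "k \<in> card ` {S. P S}"
    using assms(4,5) by blast
qed

lemma Max_card_eqI:
  assumes "finite A" "\<And>S. P S \<Longrightarrow> S \<subseteq> A" "\<And>S. P S \<Longrightarrow> card S \<le> k" "P S\<^sub>0" "card S\<^sub>0 = k"
  shows "Max (card ` {S. P S}) = k"
proof (rule Max_eqI)
  have "{S. P S} \<subseteq> Pow A"
    using assms(2) by blast
  then show "finite (card ` {S. P S})"
    using assms(1) finite_subset by blast
  show "y \<le> k" if "y \<in> card ` {S. P S}" for y
    using that assms(3) by blast
  show "k \<in> card ` {S. P S}"
    using assms(4,5) by blast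
qed

section \<open>The cycle\<close>

definition cycle_succ :: "nat \<Rightarrow> nat \<Rightarrow> nat" where
  "cycle_succ r v = (if Suc v = r then 0 else Suc v)"

definition cycle_pred :: "nat \<Rightarrow> nat \<Rightarrow> nat" where
  "cycle_pred r v = (if v = 0 then r - 1 else v - 1)"

lemma cycle_succ_lt [simp]: "v < r \<Longrightarrow> cycle_succ r v < r"
  by (simp add: cycle_succ_def)

lemma cycle_pred_lt [simp]: "v < r \<Longrightarrow> cycle_pred r v < r"
  by (auto simp: cycle_pred_def)

lemma cycle_pred_succ [simp]: "v < r \<Longrightarrow> cycle_pred r (cycle_succ r v) = v"
  by (auto simp: cycle_succ_def cycle_pred_def)

lemma cycle_succ_pred [simp]: "v < r \<Longrightarrow> cycle_succ r (cycle_pred r v) = v"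
  by (simp add: cycle_succ_def cycle_pred_def)

lemma cycle_succ_neq: "v < r \<Longrightarrow> 2 \<le> r \<Longrightarrow> cycle_succ r v \<noteq> v"
  by (simp add: cycle_succ_def)

lemma cycle_pred_neq: "v < r \<Longrightarrow> 2 \<le> r \<Longrightarrow> cycle_pred r v \<noteq> v"
  by (auto simp: cycle_pred_def)

lemma cycle_succ_neq_pred: "v < r \<Longrightarrow> 3 \<le> r \<Longrightarrow> cycle_succ r v \<noteq> cycle_pred r v"
  by (auto simp: cycle_succ_def cycle_pred_def)

lemma cycle_succ_mod: "v < r \<Longrightarrow> cycle_succ r v = Suc v mod r"
  by (simp add: cycle_succ_def)

lemma cycle_succ_eq_iff: "i < r \<Longrightarrow> j < r \<Longrightarrow> cycle_succ r j = i \<longleftrightarrow> j = cycle_pred r i"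
  by (auto simp: cycle_succ_def cycle_pred_def)

lemma cycle_adj_iff:
  assumes "3 \<le> r"
  shows "cycle_adj r i j \<longleftrightarrow> i < r \<and> (j = cycle_succ r i \<or> j = cycle_pred r i)"
proof (cases "i < r \<and> j < r")
  case True
  then show ?thesis
    using assms cycle_succ_mod[of i r] cycle_succ_mod[of j r] cycle_succ_eq_iff[of i r j]
      cycle_succ_neq[of i r] cycle_pred_neq[of i r]
    unfolding cycle_adj_def by auto
next
  case False
  then show ?thesis
    using cycle_succ_lt[of i r] cycle_pred_lt[of i r] unfolding cycle_adj_def by auto
qed

lemma dominating_set_cycle_iff:
  "3 \<le> r \<Longrightarrow> dominating_set (cycle_V r) (cycle_adj r) D \<longleftrightarrow>
     D \<subseteq> {0..<r} \<and> (\<forall>v<r. v \<in> D \<or> cycle_succ r v \<in> D \<or> cycle_pred r v \<in> D)"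
  by (auto simp: dominating_set_def cycle_V_def cycle_adj_iff)

definition cycle_independent :: "nat \<Rightarrow> nat set \<Rightarrow> bool" where
  "cycle_independent r A \<longleftrightarrow> A \<subseteq> {0..<r} \<and> (\<forall>u\<in>A. cycle_succ r u \<notin> A)"

lemma cycle_independent_subset:
  "cycle_independent r A \<Longrightarrow> B \<subseteq> A \<Longrightarrow> cycle_independent r B"
  by (auto simp: cycle_independent_def)

lemma card_cycle_independent:
  assumes "cycle_independent r A"
  shows "2 * card A \<le> r"
proof -
  have A: "A \<subseteq> {0..<r}" and indep: "\<forall>u\<in>A. cycle_succ r u \<notin> A"
    using assms by (simp_all add: cycle_independent_def)
  have "inj_on (cycle_succ r) A"
    by (rule inj_on_inverseI[of _ "cycle_pred r"]) (use A in auto)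
  moreover have "cycle_succ r ` A \<subseteq> {0..<r} - A"
    using A indep by auto
  ultimately have "card A \<le> card ({0..<r} - A)"
    by (metis card_image card_mono finite_Diff finite_atLeastLessThan)
  also have "\<dots> = r - card A"
    using A by (simp add: card_Diff_subset finite_subset)
  finally show ?thesis
    using A card_mono[of "{0..<r}" A] by simp
qed

lemma cycle_length_le_3_card_dominating_set:
  assumes r: "3 \<le> r" and D: "dominating_set (cycle_V r) (cycle_adj r) D"
  shows "r \<le> 3 * card D"
proof -
  have DC: "D \<subseteq> {0..<r}" and dom: "\<forall>v<r. v \<in> D \<or> cycle_succ r v \<in> D \<or> cycle_pred r v \<in> D"
    using D by (simp_all add: dominating_set_cycle_iff[OF r])
  have fin: "finite D"
    using DC finite_subset by blast
  have "{0..<r} \<subseteq> (\<Union>d\<in>D. {d, cycle_succ r d, cycle_pred r d})"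
  proof
    fix v assume "v \<in> {0..<r}"
    then have v: "v < r"
      by simp
    then consider "v \<in> D" | "cycle_succ r v \<in> D" | "cycle_pred r v \<in> D"
      using dom by blast
    then show "v \<in> (\<Union>d\<in>D. {d, cycle_succ r d, cycle_pred r d})"
    proof cases
      case 2
      then show ?thesis
        using cycle_pred_succ[OF v] by (intro UN_I[of "cycle_succ r v"]) auto
    next
      case 3
      then show ?thesis
        using cycle_succ_pred[OF v] by (intro UN_I[of "cycle_pred r v"]) auto
    qed auto
  qed
  then have "card {0..<r} \<le> card (\<Union>d\<in>D. {d, cycle_succ r d, cycle_pred r d})"
    by (rule card_mono[OF finite_UN_I[OF fin], rotated]) simp
  then have "r \<le> card (\<Union>d\<in>D. {d, cycle_succ r d, cycle_pred r d})"
    by simp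
  also have "\<dots> \<le> (\<Sum>d\<in>D. card {d, cycle_succ r d, cycle_pred r d})"
    by (rule card_UN_le[OF fin])
  also have "\<dots> \<le> (\<Sum>d\<in>D. 3)"
    by (rule sum_mono) (simp add: card_insert_le_m1)
  finally show ?thesis
    by simp
qed

definition multiples_of_3_below :: "nat \<Rightarrow> nat set" where
  "multiples_of_3_below r = {i. i < r \<and> 3 dvd i}"

lemma multiples_of_3_below_subset: "multiples_of_3_below r \<subseteq> {0..<r}"
  by (auto simp: multiples_of_3_below_def)

lemma card_multiples_of_3_below: "card (multiples_of_3_below r) = (r + 2) div 3"
proof -
  have "multiples_of_3_below r = (\<lambda>k. 3 * k) ` {..<(r + 2) div 3}"
    unfolding multiples_of_3_below_def by (auto elim!: dvdE)
  moreover have "inj_on (\<lambda>k::nat. 3 * k) {..<(r + 2) div 3}"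
    by (auto simp: inj_on_def)
  ultimately show ?thesis
    by (simp add: card_image)
qed

lemma dominating_set_multiples_of_3_below:
  assumes r: "3 \<le> r"
  shows "dominating_set (cycle_V r) (cycle_adj r) (multiples_of_3_below r)"
  unfolding dominating_set_cycle_iff[OF r]
proof (intro conjI allI impI)
  show "multiples_of_3_below r \<subseteq> {0..<r}"
    by (rule multiples_of_3_below_subset)
  fix v assume v: "v < r"
  consider "v mod 3 = 0" | "v mod 3 = 1" | "v mod 3 = 2"
    by linarith
  then show "v \<in> multiples_of_3_below r \<or> cycle_succ r v \<in> multiples_of_3_below r
      \<or> cycle_pred r v \<in> multiples_of_3_below r"
  proof cases
    case 1
    then show ?thesis
      using v by (simp add: multiples_of_3_below_def dvd_eq_mod_eq_0)
  next
    case 2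
    then have "cycle_pred r v = v - 1" "(v - 1) mod 3 = 0"
      by (auto simp: cycle_pred_def) presburger
    then show ?thesis
      using v by (auto simp: multiples_of_3_below_def dvd_eq_mod_eq_0)
  next
    case 3
    then show ?thesis
      using v by (auto simp: multiples_of_3_below_def cycle_succ_def dvd_eq_mod_eq_0) presburger
  qed
qed

lemma domination_number_cycle:
  assumes r: "3 \<le> r"
  shows "domination_number (cycle_V r) (cycle_adj r) = (r + 2) div 3"
  unfolding domination_number_def
proof (rule Min_card_eqI[where A = "{0..<r}"])
  show "(r + 2) div 3 \<le> card D" if "dominating_set (cycle_V r) (cycle_adj r) D" for D
    using cycle_length_le_3_card_dominating_set[OF r that] by linarith
qed (use dominating_set_multiples_of_3_below[OF r] card_multiples_of_3_below
     in \<open>simp_all add: dominating_set_cycle_iff[OF r]\<close>)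

lemma nat_ceiling_real_divide_3: "nat \<lceil>real r / 3\<rceil> = (r + 2) div 3"
proof -
  have "\<lceil>real r / 3\<rceil> = \<lceil>of_int (int r) / (of_int 3 :: real)\<rceil>"
    by simp
  also have "\<dots> = - (- int r div 3)"
    by (rule ceiling_divide_eq_div)
  also have "\<dots> = int ((r + 2) div 3)"
    by linarith
  finally show ?thesis
    by simp
qed

section \<open>Forts of the wheel\<close>

lemma wheel_V_eq: "wheel_V r = insert r {0..<r}"
  unfolding wheel_V_def by auto

lemma finite_wheel_V [simp]: "finite (wheel_V r)"
  by (simp add: wheel_V_def)

lemma wheel_nbhd_hub: "nbhd (wheel_V r) (wheel_adj r) r = {0..<r}"
  by (auto simp: nbhd_def wheel_V_def wheel_adj_def cycle_adj_def)

lemma wheel_nbhd_rim: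
  "3 \<le> r \<Longrightarrow> v < r \<Longrightarrow> nbhd (wheel_V r) (wheel_adj r) v = {cycle_succ r v, cycle_pred r v, r}"
  by (auto simp: nbhd_def wheel_V_def wheel_adj_def cycle_adj_iff less_imp_le)

lemma card_neq_1_if_two_elements: "x \<in> A \<Longrightarrow> y \<in> A \<Longrightarrow> x \<noteq> y \<Longrightarrow> card A \<noteq> 1"
  by (auto simp: card_1_singleton_iff)

lemma wheel_fort_with_hub_iff:
  assumes r: "3 \<le> r" and hub: "r \<in> F"
  shows "fort (wheel_V r) (wheel_adj r) F \<longleftrightarrow>
           F \<subseteq> wheel_V r \<and> dominating_set (cycle_V r) (cycle_adj r) (F - {r})"
proof
  assume F: "fort (wheel_V r) (wheel_adj r) F"
  have "v \<in> F - {r} \<or> cycle_succ r v \<in> F - {r} \<or> cycle_pred r v \<in> F - {r}"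
    if v: "v < r" for v
  proof (rule ccontr)
    assume "\<not> ?thesis"
    then have "nbhd (wheel_V r) (wheel_adj r) v \<inter> F = {r}" and "v \<in> wheel_V r - F"
      using wheel_nbhd_rim[OF r v] hub v cycle_succ_lt[OF v] cycle_pred_lt[OF v]
      by (auto simp: wheel_V_eq)
    moreover have "card (nbhd (wheel_V r) (wheel_adj r) v \<inter> F) \<noteq> 1"
      using F \<open>v \<in> wheel_V r - F\<close> unfolding fort_def by blast
    ultimately show False
      by simp
  qed
  moreover have "F \<subseteq> wheel_V r"
    using F by (simp add: fort_def)
  ultimately show "F \<subseteq> wheel_V r \<and> dominating_set (cycle_V r) (cycle_adj r) (F - {r})"
    by (auto simp: dominating_set_cycle_iff[OF r] wheel_V_eq)
next
  assume "F \<subseteq> wheel_V r \<and> dominating_set (cycle_V r) (cycle_adj r) (F - {r})"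
  then have FV: "F \<subseteq> wheel_V r"
    and dom: "\<And>v. v < r \<Longrightarrow> v \<in> F - {r} \<or> cycle_succ r v \<in> F - {r} \<or> cycle_pred r v \<in> F - {r}"
    by (simp_all add: dominating_set_cycle_iff[OF r])
  have "card (nbhd (wheel_V r) (wheel_adj r) v \<inter> F) \<noteq> 1" if v: "v \<in> wheel_V r - F" for v
  proof -
    have "v < r"
      using v hub by (auto simp: wheel_V_eq)
    then obtain c where "c \<in> {cycle_succ r v, cycle_pred r v}" "c \<in> F - {r}"
      using dom v by blast
    then show ?thesis
      using wheel_nbhd_rim[OF r \<open>v < r\<close>] hub
      by (intro card_neq_1_if_two_elements[of c _ r]) auto
  qed
  then show "fort (wheel_V r) (wheel_adj r) F"
    using FV hub unfolding fort_def by blast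
qed

text \<open>If two consecutive rim vertices lie outside a fort avoiding the hub, then so does the
  next one, since its only possible neighbour in the fort is its successor; walking around the
  rim empties the fort.\<close>

lemma wheel_fort_without_hub_succ:
  assumes r: "3 \<le> r" and F: "fort (wheel_V r) (wheel_adj r) F" and hub: "r \<notin> F"
    and a: "a < r" "a \<notin> F"
  shows "cycle_succ r a \<in> F"
proof (rule ccontr)
  assume "cycle_succ r a \<notin> F"
  have walk: "(a + k) mod r \<notin> F \<and> (a + Suc k) mod r \<notin> F" for k
  proof (induction k)
    case 0
    then show ?case
      using a \<open>cycle_succ r a \<notin> F\<close> cycle_succ_mod[OF a(1)] by simp
  next
    case (Suc k)
    let ?x = "(a + k) mod r" and ?y = "(a + Suc k) mod r"
    have y: "?y < r" "?y \<notin> F" "cycle_pred r ?y = ?x"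
      using Suc.IH r cycle_pred_succ[of ?x r] cycle_succ_mod[of ?x r] by (simp_all add: mod_Suc_eq)
    have "card (nbhd (wheel_V r) (wheel_adj r) ?y \<inter> F) \<noteq> 1"
      using F y(1,2) unfolding fort_def by (auto simp: wheel_V_eq)
    moreover have "nbhd (wheel_V r) (wheel_adj r) ?y \<inter> F =
        (if cycle_succ r ?y \<in> F then {cycle_succ r ?y} else {})"
      using wheel_nbhd_rim[OF r y(1)] y(3) Suc.IH hub by auto
    ultimately have "cycle_succ r ?y \<notin> F"
      by (auto split: if_splits)
    moreover have "cycle_succ r ?y = (a + Suc (Suc k)) mod r"
      using cycle_succ_mod[OF y(1)] by (simp add: mod_Suc_eq)
    ultimately show ?case
      using y(2) by simp
  qed
  then have rim: "j \<notin> F" if "j < r" for j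
  proof -
    have "a + (r - a + j) = j + r"
      using a(1) by simp
    then have "(a + (r - a + j)) mod r = j"
      using that by simp
    then show ?thesis
      using walk[of "r - a + j"] by simp
  qed
  have "F \<subseteq> insert r {0..<r}"
    using F by (simp add: fort_def wheel_V_eq)
  then have "F = {}"
    using rim hub by auto
  then show False
    using F by (simp add: fort_def)
qed

lemma wheel_fort_without_hub_iff:
  assumes r: "3 \<le> r" and hub: "r \<notin> F"
  shows "fort (wheel_V r) (wheel_adj r) F \<longleftrightarrow>
           F \<subseteq> {0..<r} \<and> 2 \<le> card F \<and> cycle_independent r ({0..<r} - F)"
proof
  assume F: "fort (wheel_V r) (wheel_adj r) F"
  then have FC: "F \<subseteq> {0..<r}"
    using hub by (auto simp: fort_def wheel_V_eq)
  have "r \<in> wheel_V r - F"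
    using hub by (simp add: wheel_V_eq)
  then have "card (nbhd (wheel_V r) (wheel_adj r) r \<inter> F) \<noteq> 1"
    using F unfolding fort_def by blast
  then have "card F \<noteq> 1"
    using wheel_nbhd_hub[of r] FC by (simp add: Int_absorb1)
  moreover have "card F \<noteq> 0"
    using F FC by (simp add: fort_def finite_subset)
  moreover have "cycle_independent r ({0..<r} - F)"
    using wheel_fort_without_hub_succ[OF r F hub] by (auto simp: cycle_independent_def)
  ultimately show "F \<subseteq> {0..<r} \<and> 2 \<le> card F \<and> cycle_independent r ({0..<r} - F)"
    using FC by simp
next
  assume "F \<subseteq> {0..<r} \<and> 2 \<le> card F \<and> cycle_independent r ({0..<r} - F)"
  then have FC: "F \<subseteq> {0..<r}" and card: "2 \<le> card F"
    and succ: "\<And>v. v < r \<Longrightarrow> v \<notin> F \<Longrightarrow> cycle_succ r v \<in> F"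
    by (auto simp: cycle_independent_def)
  have "card (nbhd (wheel_V r) (wheel_adj r) v \<inter> F) \<noteq> 1" if v: "v \<in> wheel_V r - F" for v
  proof (cases "v = r")
    case True
    then show ?thesis
      using card wheel_nbhd_hub[of r] FC by (simp add: Int_absorb1)
  next
    case False
    then have "v < r" "v \<notin> F"
      using v by (auto simp: wheel_V_eq)
    then have "cycle_succ r v \<in> F" "cycle_pred r v \<in> F"
      using succ[of v] succ[of "cycle_pred r v"] by auto
    then show ?thesis
      using wheel_nbhd_rim[OF r \<open>v < r\<close>] cycle_succ_neq_pred[OF \<open>v < r\<close> r]
      by (intro card_neq_1_if_two_elements[of "cycle_succ r v" _ "cycle_pred r v"]) auto
  qed
  moreover have "F \<noteq> {}" "F \<subseteq> wheel_V r"
    using card FC by (auto simp: wheel_V_eq)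
  ultimately show "fort (wheel_V r) (wheel_adj r) F"
    unfolding fort_def by blast
qed

lemma wheel_ZIr_set_hub_pair:
  assumes r: "3 \<le> r" and ab: "a < r" "b < r" "a \<noteq> b"
  shows "ZIr_set (wheel_V r) (wheel_adj r) {r, a, b}"
proof -
  have rim_fort: "fort (wheel_V r) (wheel_adj r) ({0..<r} - {c})" if "c < r" for c
  proof -
    have "card ({0..<r} - {c}) = r - 1"
      using that by simp
    moreover have "cycle_independent r {c}"
      using that r cycle_succ_neq[of c r] by (simp add: cycle_independent_def)
    moreover have "{0..<r} - ({0..<r} - {c}) = {c}"
      using that by auto
    ultimately show ?thesis
      using r that by (subst wheel_fort_without_hub_iff) auto
  qed
  have "dominating_set (cycle_V r) (cycle_adj r) ({0..<r} - {a, b})"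
    unfolding dominating_set_cycle_iff[OF r]
    using cycle_succ_neq[of _ r] cycle_pred_neq[of _ r] cycle_succ_neq_pred[of _ r] r by auto
  then have hub_fort: "fort (wheel_V r) (wheel_adj r) (insert r ({0..<r} - {a, b}))"
    using r by (subst wheel_fort_with_hub_iff) (auto simp: wheel_V_eq)
  show ?thesis
    unfolding ZIr_set_def private_fort_def
  proof (intro conjI ballI)
    show "{r, a, b} \<subseteq> wheel_V r"
      using ab by (simp add: wheel_V_eq)
    fix x assume "x \<in> {r, a, b}"
    then consider "x = r" | "x = a" | "x = b"
      by blast
    then show "\<exists>F. fort (wheel_V r) (wheel_adj r) F \<and> {r, a, b} \<inter> F = {x}"
    proof cases
      case 1
      then show ?thesis
        using hub_fort by blast
    next
      case 2
      then show ?thesis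
        using rim_fort[OF ab(2)] ab by (intro exI[of _ "{0..<r} - {b}"]) auto
    next
      case 3
      then show ?thesis
        using rim_fort[OF ab(1)] ab by (intro exI[of _ "{0..<r} - {a}"]) auto
    qed
  qed
qed

lemma card_hub_pair: "(a::nat) < r \<Longrightarrow> b < r \<Longrightarrow> a \<noteq> b \<Longrightarrow> card {r, a, b} = 3"
  by simp

lemma wheel_small_set_psubset_ZIr_set:
  assumes r: "3 \<le> r" and B: "B \<subseteq> wheel_V r" "card B \<le> 2"
  shows "\<exists>T. ZIr_set (wheel_V r) (wheel_adj r) T \<and> B \<subset> T"
proof -
  have "B - {r} \<subseteq> {0..<r}"
    using B(1) by (auto simp: wheel_V_eq)
  moreover have "card (B - {r}) \<le> 2"
    using B(2) card_Diff1_le[of B r] by linarith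
  ultimately obtain P where P: "B - {r} \<subseteq> P" "P \<subseteq> {0..<r}" "card P = 2"
    using exists_subset_between[of "B - {r}" 2 "{0..<r}"] r by auto
  then obtain a b where ab: "P = {a, b}" "a \<noteq> b"
    by (auto simp: card_2_iff)
  then have "a < r" "b < r"
    using P(2) by auto
  then have "ZIr_set (wheel_V r) (wheel_adj r) {r, a, b}" and "card {r, a, b} = 3"
    using wheel_ZIr_set_hub_pair[OF r] card_hub_pair ab(2) by auto
  moreover have "B \<subseteq> {r, a, b}"
    using P(1) ab(1) by blast
  moreover have "B \<noteq> {r, a, b}"
    using B(2) \<open>card {r, a, b} = 3\<close> by auto
  ultimately show ?thesis
    by blast
qed

section \<open>Zero forcing on the wheel\<close>

lemma wheel_zero_forcing_hub_edge:
  assumes r: "3 \<le> r" and a: "a < r"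
  shows "zero_forcing_set (wheel_V r) (wheel_adj r) {r, a, cycle_succ r a}"
proof (rule zero_forcing_setI_meets_forts[OF finite_wheel_V])
  show "{r, a, cycle_succ r a} \<subseteq> wheel_V r"
    using a by (simp add: wheel_V_eq)
  fix F assume F: "fort (wheel_V r) (wheel_adj r) F"
  show "{r, a, cycle_succ r a} \<inter> F \<noteq> {}"
    using wheel_fort_without_hub_succ[OF r F _ a] by blast
qed

lemma wheel_zero_forcing_rim_path:
  assumes r: "3 \<le> r" and v: "v < r"
  shows "zero_forcing_set (wheel_V r) (wheel_adj r) {cycle_pred r v, v, cycle_succ r v}"
proof (rule zero_forcing_setI_meets_forts[OF finite_wheel_V])
  show "{cycle_pred r v, v, cycle_succ r v} \<subseteq> wheel_V r"
    using v by (simp add: wheel_V_eq)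
  fix F assume F: "fort (wheel_V r) (wheel_adj r) F"
  show "{cycle_pred r v, v, cycle_succ r v} \<inter> F \<noteq> {}"
  proof (cases "r \<in> F")
    case True
    then show ?thesis
      using F v by (auto simp: wheel_fort_with_hub_iff[OF r] dominating_set_cycle_iff[OF r])
  next
    case False
    then show ?thesis
      using wheel_fort_without_hub_succ[OF r F False cycle_pred_lt[OF v]] v by auto
  qed
qed

lemma wheel_zero_forcing_contains_hub_edge:
  assumes r: "4 \<le> r" and zf: "zero_forcing_set (wheel_V r) (wheel_adj r) B" and hub: "r \<in> B"
  shows "\<exists>a<r. a \<in> B \<and> cycle_succ r a \<in> B"
proof (rule ccontr)
  let ?A = "B - {r}"
  assume "\<not> ?thesis"
  then have indep: "cycle_independent r ?A"
    using zf by (auto simp: cycle_independent_def zero_forcing_set_def wheel_V_eq)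
  then have A: "?A \<subseteq> {0..<r}" and "2 * card ?A \<le> r"
    by (simp_all add: card_cycle_independent cycle_independent_def)
  moreover have "card ({0..<r} - ?A) = r - card ?A"
    using card_Diff_subset[OF finite_subset[OF A] A] by simp
  ultimately have "2 \<le> card ({0..<r} - ?A)"
    using r by linarith
  moreover have "{0..<r} - ({0..<r} - ?A) = ?A"
    using A by blast
  ultimately have "fort (wheel_V r) (wheel_adj r) ({0..<r} - ?A)"
    using r indep by (subst wheel_fort_without_hub_iff) auto
  moreover have "B \<inter> ({0..<r} - ?A) = {}"
    using hub by auto
  ultimately show False
    using zero_forcing_set_meets_fort[OF zf] by blast
qed

lemma wheel_zero_forcing_contains_rim_path:
  assumes r: "3 \<le> r" and zf: "zero_forcing_set (wheel_V r) (wheel_adj r) B" and hub: "r \<notin> B"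
  shows "\<exists>v<r. cycle_pred r v \<in> B \<and> v \<in> B \<and> cycle_succ r v \<in> B"
proof (rule ccontr)
  assume "\<not> ?thesis"
  then have "dominating_set (cycle_V r) (cycle_adj r) ({0..<r} - B)"
    by (auto simp: dominating_set_cycle_iff[OF r])
  then have "fort (wheel_V r) (wheel_adj r) (insert r ({0..<r} - B))"
    using r by (subst wheel_fort_with_hub_iff) (auto simp: wheel_V_eq hub)
  moreover have "B \<inter> insert r ({0..<r} - B) = {}"
    using hub by auto
  ultimately show False
    using zero_forcing_set_meets_fort[OF zf] by blast
qed

lemma wheel_zero_forcing_card_ge_3:
  assumes r: "3 \<le> r" and zf: "zero_forcing_set (wheel_V r) (wheel_adj r) B"
  shows "3 \<le> card B"
proof (rule ccontr)
  assume "\<not> 3 \<le> card B"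
  then have small: "card B \<le> 2"
    by simp
  have "B \<subseteq> wheel_V r"
    using zf by (simp add: zero_forcing_set_def)
  then obtain T where T: "ZIr_set (wheel_V r) (wheel_adj r) T" "B \<subset> T"
    using wheel_small_set_psubset_ZIr_set[OF r _ small] by auto
  show False
    using not_zero_forcing_psubset_ZIr_set[OF T] zf by simp
qed

lemma Z_wheel:
  assumes r: "3 \<le> r"
  shows "Z (wheel_V r) (wheel_adj r) = 3"
  unfolding Z_def
proof (rule Min_card_eqI[where A = "wheel_V r"])
  show "zero_forcing_set (wheel_V r) (wheel_adj r) {r, 0, cycle_succ r 0}"
    using wheel_zero_forcing_hub_edge[OF r] r by simp
  show "card {r, 0, cycle_succ r 0} = 3"
    using card_hub_pair[of 0 r "cycle_succ r 0"] cycle_succ_neq[of 0 r] r by simp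
qed (use wheel_zero_forcing_card_ge_3[OF r] in \<open>simp_all add: zero_forcing_set_def\<close>)

lemma wheel_zero_forcing_subset_card_le_3:
  assumes r: "4 \<le> r" and zf: "zero_forcing_set (wheel_V r) (wheel_adj r) B"
  obtains B' where "B' \<subseteq> B" "card B' \<le> 3" "zero_forcing_set (wheel_V r) (wheel_adj r) B'"
proof (cases "r \<in> B")
  case True
  then obtain a where "a < r" "a \<in> B" "cycle_succ r a \<in> B"
    using wheel_zero_forcing_contains_hub_edge[OF r zf] by blast
  then show thesis
    using that[of "{r, a, cycle_succ r a}"] True wheel_zero_forcing_hub_edge[of r a] r
    by (simp add: card_insert_le_m1)
next
  case False
  then obtain v where "v < r" "cycle_pred r v \<in> B" "v \<in> B" "cycle_succ r v \<in> B"
    using wheel_zero_forcing_contains_rim_path[of r B] r zf by auto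
  then show thesis
    using that[of "{cycle_pred r v, v, cycle_succ r v}"] wheel_zero_forcing_rim_path[of r v] r
    by (simp add: card_insert_le_m1)
qed

lemma Zbar_wheel:
  assumes r: "4 \<le> r"
  shows "Zbar (wheel_V r) (wheel_adj r) = 3"
  unfolding Zbar_def
proof (rule Max_card_eqI[where A = "wheel_V r"])
  show "card B \<le> 3" if B: "minimal_zero_forcing_set (wheel_V r) (wheel_adj r) B" for B
  proof -
    have "zero_forcing_set (wheel_V r) (wheel_adj r) B"
      using B by (simp add: minimal_zero_forcing_set_def)
    then obtain B' where "B' \<subseteq> B" "card B' \<le> 3" "zero_forcing_set (wheel_V r) (wheel_adj r) B'"
      using wheel_zero_forcing_subset_card_le_3[OF r] by blast
    then show ?thesis
      using B unfolding minimal_zero_forcing_set_def by (metis psubsetI)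
  qed
  let ?B = "{r, 0, cycle_succ r 0}"
  show card: "card ?B = 3"
    using card_hub_pair[of 0 r "cycle_succ r 0"] cycle_succ_neq[of 0 r] r by simp
  have "\<not> zero_forcing_set (wheel_V r) (wheel_adj r) B" if "B \<subset> ?B" for B
    using psubset_card_mono[OF _ that] card wheel_zero_forcing_card_ge_3[of r B] r by force
  then show "minimal_zero_forcing_set (wheel_V r) (wheel_adj r) ?B"
    using wheel_zero_forcing_hub_edge[of r 0] r unfolding minimal_zero_forcing_set_def by simp
qed (simp_all add: minimal_zero_forcing_set_def zero_forcing_set_def)

section \<open>Maximal ZIr sets of the wheel\<close>

lemma zir_wheel:
  assumes r: "3 \<le> r"
  shows "zir (wheel_V r) (wheel_adj r) = 3"
  unfolding zir_def
proof (rule Min_card_eqI[where A = "wheel_V r"])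
  show "3 \<le> card S" if S: "maximal_ZIr_set (wheel_V r) (wheel_adj r) S" for S
  proof (rule ccontr)
    assume "\<not> 3 \<le> card S"
    then have small: "card S \<le> 2"
      by simp
    have "S \<subseteq> wheel_V r"
      using S by (simp add: maximal_ZIr_set_def ZIr_set_def)
    then obtain T where "ZIr_set (wheel_V r) (wheel_adj r) T" "S \<subset> T"
      using wheel_small_set_psubset_ZIr_set[OF r _ small] by auto
    then show False
      using S by (simp add: maximal_ZIr_set_def)
  qed
  let ?S = "{r, 0, cycle_succ r 0}"
  show "card ?S = 3"
    using card_hub_pair[of 0 r "cycle_succ r 0"] cycle_succ_neq[of 0 r] r by simp
  have S: "ZIr_set (wheel_V r) (wheel_adj r) ?S"
    using wheel_ZIr_set_hub_pair[OF r, of 0 "cycle_succ r 0"] cycle_succ_neq[of 0 r] r by simp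
  \<comment> \<open>A private fort of any further vertex would avoid the hub and the consecutive rim
    vertices \<open>0\<close> and \<open>1\<close>.\<close>
  have "\<not> ZIr_set (wheel_V r) (wheel_adj r) T" if T: "?S \<subset> T" for T
  proof
    assume "ZIr_set (wheel_V r) (wheel_adj r) T"
    moreover obtain y where "y \<in> T" "y \<notin> ?S"
      using T by blast
    ultimately obtain F where F: "fort (wheel_V r) (wheel_adj r) F" "T \<inter> F = {y}"
      by (auto simp: ZIr_set_def private_fort_def)
    then have "r \<notin> F" "0 \<notin> F" "cycle_succ r 0 \<notin> F"
      using T \<open>y \<notin> ?S\<close> by auto
    then show False
      using wheel_fort_without_hub_succ[OF r F(1), of 0] r by simp
  qed
  with S show "maximal_ZIr_set (wheel_V r) (wheel_adj r) ?S"
    by (simp add: maximal_ZIr_set_def)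
qed (simp_all add: maximal_ZIr_set_def ZIr_set_def)

lemma hub_free_private_fort_cycle_independent:
  assumes r: "3 \<le> r" and S: "S \<subseteq> wheel_V r"
    and F: "private_fort (wheel_V r) (wheel_adj r) S x F" and hub: "r \<notin> F"
  shows "cycle_independent r (S - {x, r})"
proof -
  have "fort (wheel_V r) (wheel_adj r) F" "S \<inter> F = {x}"
    using F by (simp_all add: private_fort_def)
  then have "cycle_independent r ({0..<r} - F)"
    using wheel_fort_without_hub_iff[OF r hub] by simp
  moreover have "S - {x, r} \<subseteq> {0..<r} - F"
    using S \<open>S \<inter> F = {x}\<close> by (auto simp: wheel_V_eq)
  ultimately show ?thesis
    by (rule cycle_independent_subset)
qed

lemma ZIr_set_hub_rim_independent:
  assumes r: "3 \<le> r" and S: "ZIr_set (wheel_V r) (wheel_adj r) S" "r \<in> S"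
    and big: "2 < card (S - {r})"
  shows "cycle_independent r (S - {r})"
  unfolding cycle_independent_def
proof (intro conjI ballI notI)
  have SV: "S \<subseteq> wheel_V r"
    using S(1) by (simp add: ZIr_set_def)
  then show "S - {r} \<subseteq> {0..<r}"
    by (auto simp: wheel_V_eq)
  fix u assume u: "u \<in> S - {r}" "cycle_succ r u \<in> S - {r}"
  have "card {u, cycle_succ r u} \<le> 2"
    by (simp add: card_insert_le_m1)
  then have "\<not> S - {r} \<subseteq> {u, cycle_succ r u}"
    using big card_mono[of "{u, cycle_succ r u}" "S - {r}"] by auto
  then obtain x where x: "x \<in> S - {r}" "x \<notin> {u, cycle_succ r u}"
    by blast
  then obtain F where F: "private_fort (wheel_V r) (wheel_adj r) S x F"
    using S(1) by (auto simp: ZIr_set_def)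
  then have "r \<notin> F"
    using S(2) x(1) by (auto simp: private_fort_def)
  with F have "cycle_independent r (S - {x, r})"
    by (rule hub_free_private_fort_cycle_independent[OF r SV])
  then show False
    using u x by (auto simp: cycle_independent_def)
qed

lemma ZIr_set_rim_complement_dominating:
  assumes r: "3 \<le> r" and S: "ZIr_set (wheel_V r) (wheel_adj r) S" "3 < card S"
    and hub_forts: "\<And>x F. private_fort (wheel_V r) (wheel_adj r) S x F \<Longrightarrow> r \<in> F"
  shows "dominating_set (cycle_V r) (cycle_adj r) ({0..<r} - S)"
  unfolding dominating_set_cycle_iff[OF r]
proof (intro conjI allI impI)
  show "{0..<r} - S \<subseteq> {0..<r}"
    by blast
  fix v assume v: "v < r"
  show "v \<in> {0..<r} - S \<or> cycle_succ r v \<in> {0..<r} - S \<or> cycle_pred r v \<in> {0..<r} - S"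
  proof (cases "v \<in> S")
    case False
    then show ?thesis
      using v by simp
  next
    case True
    have "card {v, cycle_succ r v, cycle_pred r v} \<le> 3"
      by (simp add: card_insert_le_m1)
    then have "\<not> S \<subseteq> {v, cycle_succ r v, cycle_pred r v}"
      using S(2) card_mono[of "{v, cycle_succ r v, cycle_pred r v}" S] by auto
    then obtain x where x: "x \<in> S" "x \<notin> {v, cycle_succ r v, cycle_pred r v}"
      by blast
    then obtain F where F: "private_fort (wheel_V r) (wheel_adj r) S x F"
      using S(1) by (auto simp: ZIr_set_def)
    then have "r \<in> F" "fort (wheel_V r) (wheel_adj r) F" "S \<inter> F = {x}"
      using hub_forts by (auto simp: private_fort_def)
    then have "dominating_set (cycle_V r) (cycle_adj r) (F - {r})"
      using wheel_fort_with_hub_iff[OF r] by blast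
    moreover have "v \<notin> F"
      using True x(2) \<open>S \<inter> F = {x}\<close> by auto
    ultimately have "cycle_succ r v \<in> F \<or> cycle_pred r v \<in> F"
      using v by (auto simp: dominating_set_cycle_iff[OF r])
    then show ?thesis
      using x(2) \<open>S \<inter> F = {x}\<close> v by auto
  qed
qed

lemma wheel_ZIr_set_card_le:
  assumes r: "5 \<le> r" and S: "ZIr_set (wheel_V r) (wheel_adj r) S"
  shows "card S \<le> r - (r + 2) div 3"
proof -
  have r3: "3 \<le> r"
    using r by simp
  have SV: "S \<subseteq> wheel_V r"
    using S by (simp add: ZIr_set_def)
  then have fin: "finite S"
    by (rule finite_subset) simp
  consider (hub) "r \<in> S"
    | (hub_free_fort) x F where "r \<notin> S" "private_fort (wheel_V r) (wheel_adj r) S x F" "r \<notin> F"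
    | (hub_forts) "r \<notin> S" "\<And>x F. private_fort (wheel_V r) (wheel_adj r) S x F \<Longrightarrow> r \<in> F"
    by blast
  then show ?thesis
  proof cases
    case hub
    have "2 * card (S - {r}) \<le> r"
    proof (cases "card (S - {r}) \<le> 2")
      case True
      then show ?thesis
        using r by linarith
    next
      case False
      then show ?thesis
        by (intro card_cycle_independent ZIr_set_hub_rim_independent[OF r3 S hub]) simp
    qed
    moreover have "card S = card (S - {r}) + 1"
      using card_Suc_Diff1[OF fin hub] by simp
    ultimately show ?thesis
      using r by linarith
  next
    case hub_free_fort
    then have "x \<in> S"
      by (auto simp: private_fort_def)
    have "cycle_independent r (S - {x, r})"
      by (rule hub_free_private_fort_cycle_independent[OF r3 SV hub_free_fort(2,3)])
    then have "2 * card (S - {x, r}) \<le> r"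
      by (rule card_cycle_independent)
    moreover have "S - {x, r} = S - {x}"
      using hub_free_fort(1) by blast
    then have "card S = card (S - {x, r}) + 1"
      using card_Suc_Diff1[OF fin \<open>x \<in> S\<close>] by simp
    ultimately show ?thesis
      using r by linarith
  next
    case hub_forts
    show ?thesis
    proof (cases "card S \<le> 3")
      case True
      then show ?thesis
        using r by linarith
    next
      case False
      then have "dominating_set (cycle_V r) (cycle_adj r) ({0..<r} - S)"
        using ZIr_set_rim_complement_dominating[OF r3 S _ hub_forts(2)] by simp
      then have "r \<le> 3 * card ({0..<r} - S)"
        by (rule cycle_length_le_3_card_dominating_set[OF r3])
      moreover have "S \<subseteq> {0..<r}"
        using SV hub_forts(1) by (auto simp: wheel_V_eq)
      then have "card ({0..<r} - S) = r - card S" "card S \<le> r"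
        using card_mono[of "{0..<r}" S] by (simp_all add: card_Diff_subset fin)
      ultimately show ?thesis
        by linarith
    qed
  qed
qed

lemma wheel_ZIr_set_rim_minus_multiples_of_3:
  assumes r: "3 \<le> r"
  shows "ZIr_set (wheel_V r) (wheel_adj r) ({0..<r} - multiples_of_3_below r)"
  unfolding ZIr_set_def private_fort_def
proof (intro conjI ballI)
  let ?M = "multiples_of_3_below r"
  show "{0..<r} - ?M \<subseteq> wheel_V r"
    by (auto simp: wheel_V_eq)
  fix x assume x: "x \<in> {0..<r} - ?M"
  have M: "?M \<subseteq> {0..<r}"
    by (rule multiples_of_3_below_subset)
  have "dominating_set (cycle_V r) (cycle_adj r) (insert x ?M)"
    using dominating_set_multiples_of_3_below[OF r] x M by (auto simp: dominating_set_cycle_iff[OF r])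
  moreover have "insert r (insert x ?M) - {r} = insert x ?M"
    using x M by auto
  ultimately have "fort (wheel_V r) (wheel_adj r) (insert r (insert x ?M))"
    using x M r by (subst wheel_fort_with_hub_iff) (auto simp: wheel_V_eq)
  moreover have "({0..<r} - ?M) \<inter> insert r (insert x ?M) = {x}"
    using x by auto
  ultimately show "\<exists>F. fort (wheel_V r) (wheel_adj r) F \<and> ({0..<r} - ?M) \<inter> F = {x}"
    by blast
qed

lemma ZIR_wheel:
  assumes r: "5 \<le> r"
  shows "ZIR (wheel_V r) (wheel_adj r) = r - (r + 2) div 3"
  unfolding ZIR_def
proof (rule Max_card_eqI[where A = "wheel_V r"])
  let ?S = "{0..<r} - multiples_of_3_below r"
  have S: "ZIr_set (wheel_V r) (wheel_adj r) ?S"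
    using wheel_ZIr_set_rim_minus_multiples_of_3 r by simp
  show card: "card ?S = r - (r + 2) div 3"
    using card_Diff_subset[OF finite_subset[OF multiples_of_3_below_subset]
        multiples_of_3_below_subset] card_multiples_of_3_below[of r]
    by simp
  have "\<not> ZIr_set (wheel_V r) (wheel_adj r) T" if T: "?S \<subset> T" for T
  proof
    assume "ZIr_set (wheel_V r) (wheel_adj r) T"
    moreover from this have "finite T"
      by (auto simp: ZIr_set_def intro: finite_subset)
    ultimately show False
      using psubset_card_mono[OF _ T] card wheel_ZIr_set_card_le[OF r] by fastforce
  qed
  with S show "maximal_ZIr_set (wheel_V r) (wheel_adj r) ?S"
    by (simp add: maximal_ZIr_set_def)
qed (use wheel_ZIr_set_card_le[OF r] in \<open>simp_all add: maximal_ZIr_set_def ZIr_set_def\<close>)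

theorem proposition6p4:
  fixes r :: nat
  assumes "r \<ge> 5"
  shows "ZIR (wheel_V r) (wheel_adj r) = r - domination_number (cycle_V r) (cycle_adj r)
       \<and> r - domination_number (cycle_V r) (cycle_adj r) = r - nat \<lceil>real r / 3\<rceil>
       \<and> zir (wheel_V r) (wheel_adj r) = 3
       \<and> Z (wheel_V r) (wheel_adj r) = 3
       \<and> Zbar (wheel_V r) (wheel_adj r) = 3"
proof -
  have "3 \<le> r" "4 \<le> r"
    using assms by simp_all
  then show ?thesis
    using ZIR_wheel[OF assms] domination_number_cycle nat_ceiling_real_divide_3[of r]
      zir_wheel Z_wheel Zbar_wheel
    by simp
qed

end
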